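(* Let $G$ be a finite, simple, connected $(q+1)$-regular graph with $n$ vertices and $m$ edges, let $a\in[0,1]$ and $b\in\mathbb R$, and let $\tilde{\mathbf U}$ be the generalized Grover matrix of $G$ with parameters $a,b$. Then \begin{align*} \det(\lambda\mathbf I_{2m}-\tilde{\mathbf U})&=(\lambda^2-b^2)^{m-n}\det\Big(\{\lambda^2+b((1-q)a+bq)\}\mathbf I_n-\lambda((1-q)a+b(q+1))\mathbf P(G)\Big)\\ &=(\lambda^2-b^2)^{m-n}\det\Big(\{\lambda^2-\lambda((1-q)a+b(q+1))+b((1-q)a+bq)\}\mathbf I_n+\lambda\Big(b-\frac{q-1}{q+1}a\Big)\Delta\Big), \end{align*} where $\Delta=\mathbf D-\mathbf A(G)$ is the Laplacian of $G$.
   Context: $D(G)$ is the set of $2m$ arcs of $G$ (for each edge $uv$, both $(u,v)$ and $(v,u)$); for $e=(u,v)$, $o(e)=u$, $t(e)=v$, $e^{-1}=(v,u)$, and $d_v=\deg v$. The generalized Grover matrix $\tilde{\mathbf U}=(\tilde U_{ef})_{e,f\in D(G)}$ has $\tilde U_{ef}=(2/d_{t(f)}-1)a+b$ if $t(f)=o(e)$ and $f\ne e^{-1}$; $\tilde U_{ef}=(2/d_{t(f)}-1)a$ if $f=e^{-1}$; $0$ otherwise. $\mathbf P(G)$ has entries $P_{uv}=1/\deg u$ if $u,v$ adjacent and $0$ otherwise; $\mathbf D$ is the diagonal degree matrix and $\mathbf A(G)$ the adjacency matrix. *)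

theory Defs
  imports "Jordan_Normal_Form.Determinant"
begin

definition simple_graph :: "nat \<Rightarrow> (nat \<Rightarrow> nat \<Rightarrow> bool) \<Rightarrow> bool" where
  "simple_graph n adj \<longleftrightarrow>
     (\<forall>u v. adj u v \<longrightarrow> u < n \<and> v < n) \<and>
     (\<forall>u v. adj u v \<longrightarrow> adj v u) \<and> (\<forall>u. \<not> adj u u)"

definition connected_graph :: "nat \<Rightarrow> (nat \<Rightarrow> nat \<Rightarrow> bool) \<Rightarrow> bool" where
  "connected_graph n adj \<longleftrightarrow> (\<forall>u v. u < n \<longrightarrow> v < n \<longrightarrow> adj\<^sup>*\<^sup>* u v)"

definition deg :: "nat \<Rightarrow> (nat \<Rightarrow> nat \<Rightarrow> bool) \<Rightarrow> nat \<Rightarrow> nat" where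
  "deg n adj u = card {v. v < n \<and> adj u v}"

definition regular_graph :: "nat \<Rightarrow> (nat \<Rightarrow> nat \<Rightarrow> bool) \<Rightarrow> nat \<Rightarrow> bool" where
  "regular_graph n adj k \<longleftrightarrow> (\<forall>u < n. deg n adj u = k)"

definition num_edges :: "(nat \<Rightarrow> nat \<Rightarrow> bool) \<Rightarrow> nat" where
  "num_edges adj = card {{u, v} | u v. adj u v}"

definition arc_enum :: "(nat \<Rightarrow> nat \<Rightarrow> bool) \<Rightarrow> (nat \<times> nat) list \<Rightarrow> bool" where
  "arc_enum adj as \<longleftrightarrow> distinct as \<and> set as = {(u, v). adj u v}"

text \<open>Generalized Grover matrix, rows/columns indexed by the arcs in the order of the list.
  For an arc e = (u,v): o(e) = fst e, t(e) = snd e, e^{-1} = (snd e, fst e).\<close>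
definition grover_mat ::
  "nat \<Rightarrow> (nat \<Rightarrow> nat \<Rightarrow> bool) \<Rightarrow> (nat \<times> nat) list \<Rightarrow> real \<Rightarrow> real \<Rightarrow> real mat" where
  "grover_mat n adj as a b = mat (length as) (length as) (\<lambda>(i, j).
     let e = as ! i; f = as ! j; dtf = real (deg n adj (snd f)) in
     if snd f = fst e \<and> f \<noteq> (snd e, fst e) then (2 / dtf - 1) * a + b
     else if f = (snd e, fst e) then (2 / dtf - 1) * a
     else 0)"

definition trans_mat :: "nat \<Rightarrow> (nat \<Rightarrow> nat \<Rightarrow> bool) \<Rightarrow> real mat" where
  "trans_mat n adj = mat n n (\<lambda>(u, v). if adj u v then 1 / real (deg n adj u) else 0)"

definition degree_mat :: "nat \<Rightarrow> (nat \<Rightarrow> nat \<Rightarrow> bool) \<Rightarrow> real mat" where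
  "degree_mat n adj = mat n n (\<lambda>(u, v). if u = v then real (deg n adj u) else 0)"

definition adj_mat :: "nat \<Rightarrow> (nat \<Rightarrow> nat \<Rightarrow> bool) \<Rightarrow> real mat" where
  "adj_mat n adj = mat n n (\<lambda>(u, v). if adj u v then 1 else 0)"

end

(* Let X be the arc-edge incidence matrix, S and T the incidence matrices of the origins and
   termini of the arcs, J the arc-reversal permutation and w = (2/(q+1) - 1) a + b.  Then
   U = w S T^T - b J and X X^T = I + J, so lambda I - U = (lambda - b) I - W Z with W = [X S]
   and Z = [-b X^T; w T^T].  Sylvester's identity turns the determinant of size 2m into one of
   size m + n, whose upper left block is (lambda + b) I because X^T X = 2 I; by T^T S = A,
   J S = T and T^T T = (q+1) I its Schur complement is the n x n matrix of the statement.  This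
   gives the identity multiplied by powers of lambda - b and lambda + b; cancelling them proves
   it for lambda^2 <> b^2, and continuity in lambda extends it to lambda = +-b when m >= n. *)

theory Submission
  imports Defs
begin

lemma det_four_block_mat_smult_one_corner:
  fixes B C D :: "'a::idom mat"
  assumes B: "B \<in> carrier_mat k n" and C: "C \<in> carrier_mat n k" and D: "D \<in> carrier_mat n n"
  shows "det (four_block_mat (c \<cdot>\<^sub>m 1\<^sub>m k) B C D) * c ^ n = c ^ k * det (c \<cdot>\<^sub>m D - C * B)"
proof -
  let ?M = "four_block_mat (c \<cdot>\<^sub>m 1\<^sub>m k) B C D"
  let ?R = "four_block_mat (1\<^sub>m k) (- B) (0\<^sub>m n k) (c \<cdot>\<^sub>m 1\<^sub>m n)"
  have "c \<cdot>\<^sub>m 1\<^sub>m k * B = c \<cdot>\<^sub>m B" "B * (c \<cdot>\<^sub>m 1\<^sub>m n) = c \<cdot>\<^sub>m B" "D * (c \<cdot>\<^sub>m 1\<^sub>m n) = c \<cdot>\<^sub>m D"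
    using B D by (auto simp: mult_smult_assoc_mat mult_smult_distrib)
  then have "?M * ?R = four_block_mat (c \<cdot>\<^sub>m 1\<^sub>m k) (0\<^sub>m k n) C (c \<cdot>\<^sub>m D - C * B)"
    using B C D by (subst mult_four_block_mat[of _ k k _ n _ n _ _ k _ n])
      (auto simp: minus_add_uminus_mat[of _ n n] comm_add_mat[of _ n n])
  then have "det ?M * det ?R = c ^ k * det (c \<cdot>\<^sub>m D - C * B)"
    using B C D by (subst det_mult[symmetric, of _ "k + n"], simp_all)
      (subst det_four_block_mat_upper_right_zero[of _ k _ n], auto)
  moreover have "det ?R = c ^ n"
    using B by (subst det_four_block_mat_lower_left_zero[of _ k _ n]) auto
  ultimately show ?thesis by simp
qed

lemma det_smult_one_minus_mult_swap:
  fixes A B :: "'a::idom mat"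
  assumes A: "A \<in> carrier_mat k n" and B: "B \<in> carrier_mat n k"
  shows "det (c \<cdot>\<^sub>m 1\<^sub>m k - A * B) * c ^ n = c ^ k * det (c \<cdot>\<^sub>m 1\<^sub>m n - B * A)"
proof -
  let ?M = "four_block_mat (c \<cdot>\<^sub>m 1\<^sub>m k) A B (1\<^sub>m n)"
  let ?L = "four_block_mat (1\<^sub>m k) (- A) (0\<^sub>m n k) (1\<^sub>m n)"
  have "?L * ?M = four_block_mat (c \<cdot>\<^sub>m 1\<^sub>m k - A * B) (0\<^sub>m k n) B (1\<^sub>m n)"
    using A B by (subst mult_four_block_mat[of _ k k _ n _ n _ _ k _ n])
      (auto simp: minus_add_uminus_mat[of _ k k] comm_add_mat[of _ k k])
  then have "det ?L * det ?M = det (c \<cdot>\<^sub>m 1\<^sub>m k - A * B)"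
    using A B by (subst det_mult[symmetric, of _ "k + n"], simp_all)
      (subst det_four_block_mat_upper_right_zero[of _ k _ n], auto)
  moreover have "det ?L = 1"
    using A by (subst det_four_block_mat_lower_left_zero[of _ k _ n]) auto
  ultimately show ?thesis
    using det_four_block_mat_smult_one_corner[OF A B, of "1\<^sub>m n" c] by simp
qed

lemma smult_one_minus_four_block_mat:
  assumes "A \<in> carrier_mat k k" "B \<in> carrier_mat k l" "C \<in> carrier_mat l k" "D \<in> carrier_mat l l"
  shows "(c::'a::ring_1) \<cdot>\<^sub>m 1\<^sub>m (k + l) - four_block_mat A B C D
    = four_block_mat (c \<cdot>\<^sub>m 1\<^sub>m k - A) (- B) (- C) (c \<cdot>\<^sub>m 1\<^sub>m l - D)"
  by (rule eq_matI) (use assms in auto)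

definition append_cols :: "'a::zero mat \<Rightarrow> 'a mat \<Rightarrow> 'a mat" where
  "append_cols A B = four_block_mat A B (0\<^sub>m 0 (dim_col A)) (0\<^sub>m 0 (dim_col B))"

lemma carrier_append_cols [simp, intro]:
  "A \<in> carrier_mat nr nc1 \<Longrightarrow> B \<in> carrier_mat nr nc2 \<Longrightarrow> append_cols A B \<in> carrier_mat nr (nc1 + nc2)"
  unfolding append_cols_def by auto

lemma append_cols_mult_append_rows:
  fixes A :: "'a::semiring_0 mat"
  assumes "A \<in> carrier_mat nr k" "B \<in> carrier_mat nr l" "C \<in> carrier_mat k nc" "D \<in> carrier_mat l nc"
  shows "append_cols A B * (C @\<^sub>r D) = A * C + B * D"
  using assms unfolding append_cols_def append_rows_def
  by (subst mult_four_block_mat[of _ nr k _ l _ 0 _ _ nc _ 0]) (auto intro!: eq_matI)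

lemma append_rows_mult_append_cols:
  fixes A :: "'a::semiring_0 mat"
  assumes "C \<in> carrier_mat k nr" "D \<in> carrier_mat l nr" "A \<in> carrier_mat nr k'" "B \<in> carrier_mat nr l'"
  shows "(C @\<^sub>r D) * append_cols A B = four_block_mat (C * A) (C * B) (D * A) (D * B)"
  using assms unfolding append_cols_def append_rows_def
  by (subst mult_four_block_mat[of _ k nr _ 0 _ l _ _ k' _ l']) (auto intro!: eq_matI)

lemma sum_nth_distinct:
  "distinct xs \<Longrightarrow> (\<Sum>i = 0..<length xs. f (xs ! i)) = (\<Sum>x\<in>set xs. f x)"
  using sum_list_sum_nth[of "map f xs"] by (simp add: sum_list_distinct_conv_sum_set)

definition incidence_mat :: "'a list \<Rightarrow> 'b list \<Rightarrow> ('a \<Rightarrow> 'b) \<Rightarrow> 'c::{zero,one} mat" where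
  "incidence_mat xs ys f = mat (length xs) (length ys) (\<lambda>(i, k). if f (xs ! i) = ys ! k then 1 else 0)"

lemma incidence_mat_carrier [simp]:
  "incidence_mat xs ys f \<in> carrier_mat (length xs) (length ys)"
  and dim_incidence_mat [simp]:
  "dim_row (incidence_mat xs ys f) = length xs" "dim_col (incidence_mat xs ys f) = length ys"
  by (simp_all add: incidence_mat_def)

lemma index_incidence_mat [simp]:
  "i < length xs \<Longrightarrow> k < length ys \<Longrightarrow> incidence_mat xs ys f $$ (i, k) = (if f (xs ! i) = ys ! k then 1 else 0)"
  by (simp add: incidence_mat_def)

lemma incidence_mat_mult:
  assumes "distinct ys" "f ` set xs \<subseteq> set ys"
  shows "(incidence_mat xs ys f * incidence_mat ys zs g :: 'c::semiring_1 mat) = incidence_mat xs zs (g \<circ> f)"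
proof (rule eq_matI)
  fix i l assume "i < dim_row (incidence_mat xs zs (g \<circ> f) :: 'c mat)" "l < dim_col (incidence_mat xs zs (g \<circ> f) :: 'c mat)"
  then have i: "i < length xs" and l: "l < length zs" by (auto simp: incidence_mat_def)
  have "f (xs ! i) \<in> set ys" using assms(2) i by auto
  have "(incidence_mat xs ys f * incidence_mat ys zs g :: 'c mat) $$ (i, l)
      = (\<Sum>j = 0..<length ys. (\<lambda>y. if y = f (xs ! i) then if g y = zs ! l then 1 else 0 else 0) (ys ! j))"
    using i l by (auto simp: incidence_mat_def scalar_prod_def intro!: sum.cong)
  also have "\<dots> = (\<Sum>y\<in>set ys. if y = f (xs ! i) then if g y = zs ! l then 1 else 0 else 0)"
    using assms(1) by (rule sum_nth_distinct)
  also have "\<dots> = incidence_mat xs zs (g \<circ> f) $$ (i, l)"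
    using i l \<open>f (xs ! i) \<in> set ys\<close> by (simp add: incidence_mat_def)
  finally show "(incidence_mat xs ys f * incidence_mat ys zs g :: 'c mat) $$ (i, l) = incidence_mat xs zs (g \<circ> f) $$ (i, l)" .
qed (auto simp: incidence_mat_def)

lemma incidence_mat_mult_transpose:
  assumes "distinct ys" "f ` set xs \<subseteq> set ys"
  shows "(incidence_mat xs ys f * (incidence_mat zs ys g)\<^sup>T :: 'c::semiring_1 mat)
    = mat (length xs) (length zs) (\<lambda>(i, j). if f (xs ! i) = g (zs ! j) then 1 else 0)"
proof (rule eq_matI)
  fix i j assume "i < dim_row (mat (length xs) (length zs) (\<lambda>(i, j). if f (xs ! i) = g (zs ! j) then 1 else (0::'c)))"
    "j < dim_col (mat (length xs) (length zs) (\<lambda>(i, j). if f (xs ! i) = g (zs ! j) then 1 else (0::'c)))"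
  then have i: "i < length xs" and j: "j < length zs" by auto
  have "f (xs ! i) \<in> set ys" using assms(2) i by auto
  have "(incidence_mat xs ys f * (incidence_mat zs ys g)\<^sup>T :: 'c mat) $$ (i, j)
      = (\<Sum>k = 0..<length ys. (\<lambda>y. if y = f (xs ! i) then if g (zs ! j) = y then 1 else 0 else 0) (ys ! k))"
    using i j by (auto simp: incidence_mat_def scalar_prod_def intro!: sum.cong)
  also have "\<dots> = (\<Sum>y\<in>set ys. if y = f (xs ! i) then if g (zs ! j) = y then 1 else 0 else 0)"
    using assms(1) by (rule sum_nth_distinct)
  finally show "(incidence_mat xs ys f * (incidence_mat zs ys g)\<^sup>T :: 'c mat) $$ (i, j)
      = mat (length xs) (length zs) (\<lambda>(i, j). if f (xs ! i) = g (zs ! j) then 1 else 0) $$ (i, j)"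
    using i j \<open>f (xs ! i) \<in> set ys\<close> by auto
qed (auto simp: incidence_mat_def)

lemma incidence_mat_transpose_mult:
  assumes "distinct xs"
  shows "((incidence_mat xs ys f)\<^sup>T * incidence_mat xs zs g :: 'c::semiring_1 mat)
    = mat (length ys) (length zs) (\<lambda>(k, l). of_nat (card {x \<in> set xs. f x = ys ! k \<and> g x = zs ! l}))"
proof (rule eq_matI)
  fix k l assume "k < dim_row (mat (length ys) (length zs) (\<lambda>(k, l). of_nat (card {x \<in> set xs. f x = ys ! k \<and> g x = zs ! l})) :: 'c mat)"
    "l < dim_col (mat (length ys) (length zs) (\<lambda>(k, l). of_nat (card {x \<in> set xs. f x = ys ! k \<and> g x = zs ! l})) :: 'c mat)"
  then have k: "k < length ys" and l: "l < length zs" by auto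
  have "((incidence_mat xs ys f)\<^sup>T * incidence_mat xs zs g :: 'c mat) $$ (k, l)
      = (\<Sum>i = 0..<length xs. (\<lambda>x. if f x = ys ! k \<and> g x = zs ! l then 1 else 0) (xs ! i))"
    using k l by (auto simp: incidence_mat_def scalar_prod_def intro!: sum.cong)
  also have "\<dots> = (\<Sum>x\<in>set xs. if f x = ys ! k \<and> g x = zs ! l then 1 else 0)"
    using assms by (rule sum_nth_distinct)
  finally show "((incidence_mat xs ys f)\<^sup>T * incidence_mat xs zs g :: 'c mat) $$ (k, l)
      = mat (length ys) (length zs) (\<lambda>(k, l). of_nat (card {x \<in> set xs. f x = ys ! k \<and> g x = zs ! l})) $$ (k, l)"
    using k l by (simp add: sum.If_cases Int_def)
qed (auto simp: incidence_mat_def)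

lemma continuous_at_det:
  fixes A :: "'b::t2_space \<Rightarrow> 'a::real_normed_field mat"
  assumes "\<And>x. A x \<in> carrier_mat k k"
    and "\<And>i j. i < k \<Longrightarrow> j < k \<Longrightarrow> continuous (at x0) (\<lambda>x. A x $$ (i, j))"
  shows "continuous (at x0) (\<lambda>x. det (A x))"
proof -
  have "det (A x) = (\<Sum>p \<in> {p. p permutes {0..<k}}. signof p * (\<Prod>i = 0..<k. A x $$ (i, p i)))" for x
    using assms(1)[of x] unfolding det_def by auto
  moreover have "continuous (at x0) (\<lambda>x. A x $$ (i, p i))" if "p permutes {0..<k}" "i \<in> {0..<k}" for p i
    using that by (intro assms(2)) (auto dest: permutes_in_image)
  ultimately show ?thesis
    by (simp only:) (intro continuous_sum continuous_mult continuous_const continuous_prod; simp)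
qed

lemma continuous_at_det_smult_diff:
  fixes A B :: "'a::real_normed_field mat" and f g :: "'b::t2_space \<Rightarrow> 'a"
  assumes "A \<in> carrier_mat k k" "B \<in> carrier_mat k k" "continuous (at x0) f" "continuous (at x0) g"
  shows "continuous (at x0) (\<lambda>x. det (f x \<cdot>\<^sub>m A - g x \<cdot>\<^sub>m B))"
proof (rule continuous_at_det)
  show "f x \<cdot>\<^sub>m A - g x \<cdot>\<^sub>m B \<in> carrier_mat k k" for x
    using assms(1,2) by auto
  fix i j assume "i < k" "j < k"
  then have "(f x \<cdot>\<^sub>m A - g x \<cdot>\<^sub>m B) $$ (i, j) = f x * A $$ (i, j) - g x * B $$ (i, j)" for x
    using assms(1,2) by auto
  then show "continuous (at x0) (\<lambda>x. (f x \<cdot>\<^sub>m A - g x \<cdot>\<^sub>m B) $$ (i, j))"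
    using assms(3,4) by (simp only:) (intro continuous_intros)
qed

lemma continuous_at_eq_off_finite:
  fixes f g :: "'a::{perfect_space, t2_space} \<Rightarrow> 'b::t2_space"
  assumes "continuous (at x0) f" "continuous (at x0) g"
    and "finite S" "\<And>x. x \<notin> S \<Longrightarrow> f x = g x"
  shows "f x0 = g x0"
proof -
  have "\<forall>\<^sub>F x in at x0. \<forall>y\<in>S. x \<noteq> y"
    using \<open>finite S\<close> by (intro eventually_ball_finite) (auto intro: eventually_neq_at_within)
  then have "\<forall>\<^sub>F x in at x0. f x = g x"
    by (rule eventually_mono) (use assms(4) in auto)
  moreover have "(f \<longlongrightarrow> f x0) (at x0)" "(g \<longlongrightarrow> g x0) (at x0)"
    using assms(1,2) continuous_at by auto
  ultimately show ?thesis
    using tendsto_cong tendsto_unique[OF at_neq_bot] by metis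
qed

lemma eq_powi_mult_of_mult_eq:
  fixes F H :: "real \<Rightarrow> real" and b :: real and m n :: nat
  assumes cleared: "\<And>x. F x * (x - b) ^ (m + n) * (x + b) ^ n = (x - b) ^ (2 * m) * (x + b) ^ m * H x"
    and cont: "continuous (at x0) F" "continuous (at x0) H"
    and defined: "n \<le> m \<or> x0\<^sup>2 \<noteq> b\<^sup>2"
  shows "F x0 = (x0\<^sup>2 - b\<^sup>2) powi (int m - int n) * H x0"
proof -
  have off: "F x = (x\<^sup>2 - b\<^sup>2) powi (int m - int n) * H x" if "x\<^sup>2 \<noteq> b\<^sup>2" for x
  proof -
    have sq: "x\<^sup>2 - b\<^sup>2 = (x - b) * (x + b)" by (simp add: power2_eq_square algebra_simps)
    have "x - b \<noteq> 0" using that by auto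
    have "(F x * (x\<^sup>2 - b\<^sup>2) ^ n) * (x - b) ^ m = F x * (x - b) ^ (m + n) * (x + b) ^ n"
      unfolding sq power_mult_distrib power_add by (simp only: mult_ac)
    also have "\<dots> = (x - b) ^ (2 * m) * (x + b) ^ m * H x"
      by (rule cleared)
    also have "\<dots> = ((x\<^sup>2 - b\<^sup>2) ^ m * H x) * (x - b) ^ m"
      unfolding sq power_mult_distrib mult_2 power_add by (simp only: mult_ac)
    finally have "(F x * (x\<^sup>2 - b\<^sup>2) ^ n) * (x - b) ^ m = ((x\<^sup>2 - b\<^sup>2) ^ m * H x) * (x - b) ^ m" .
    then have "F x * (x\<^sup>2 - b\<^sup>2) ^ n = (x\<^sup>2 - b\<^sup>2) ^ m * H x"
      using \<open>x - b \<noteq> 0\<close> by simp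
    then show ?thesis
      using that by (simp add: power_int_diff field_simps)
  qed
  show ?thesis
  proof (cases "x0\<^sup>2 = b\<^sup>2")
    case True
    then have "n \<le> m" using defined by simp
    then have "int m - int n = int (m - n)" by simp
    then have pow: "(x\<^sup>2 - b\<^sup>2) powi (int m - int n) = (x\<^sup>2 - b\<^sup>2) ^ (m - n)" for x :: real
      by (simp only: power_int_of_nat)
    have "F x0 = (x0\<^sup>2 - b\<^sup>2) ^ (m - n) * H x0"
    proof (rule continuous_at_eq_off_finite[where f = F and g = "\<lambda>x. (x\<^sup>2 - b\<^sup>2) ^ (m - n) * H x" and S = "{b, - b}"])
      show "continuous (at x0) (\<lambda>x. (x\<^sup>2 - b\<^sup>2) ^ (m - n) * H x)"
        by (intro continuous_intros cont(2))
      show "F x = (x\<^sup>2 - b\<^sup>2) ^ (m - n) * H x" if "x \<notin> {b, - b}" for x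
        using off[of x] that by (auto simp: pow power2_eq_iff)
    qed (simp_all add: cont(1))
    then show ?thesis by (simp add: pow)
  qed (rule off)
qed

definition edge_of :: "nat \<times> nat \<Rightarrow> nat \<times> nat" where
  "edge_of e = (if fst e < snd e then e else prod.swap e)"

lemma edge_of_eq_iff:
  assumes "fst x \<noteq> snd x"
  shows "edge_of x = edge_of y \<longleftrightarrow> y = x \<or> y = prod.swap x"
  using assms by (cases x; cases y) (auto simp: edge_of_def)

locale regular_graph_arcs =
  fixes n q :: nat and adj :: "nat \<Rightarrow> nat \<Rightarrow> bool" and as :: "(nat \<times> nat) list"
  assumes simple: "simple_graph n adj"
    and regular: "regular_graph n adj (q + 1)"
    and arcs: "arc_enum adj as"
begin

lemma adj_bounded: "adj u v \<Longrightarrow> u < n \<and> v < n"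
  and adj_sym: "adj u v \<Longrightarrow> adj v u"
  and adj_irrefl: "\<not> adj u u"
  using simple unfolding simple_graph_def by blast+

lemma distinct_arcs: "distinct as"
  and mem_arcs_iff: "e \<in> set as \<longleftrightarrow> adj (fst e) (snd e)"
  using arcs unfolding arc_enum_def by auto

lemma deg_eq: "v < n \<Longrightarrow> deg n adj v = q + 1"
  using regular unfolding regular_graph_def by blast

lemma swap_mem_arcs: "e \<in> set as \<Longrightarrow> prod.swap e \<in> set as"
  by (simp add: mem_arcs_iff adj_sym)

lemma arc_not_loop: "e \<in> set as \<Longrightarrow> fst e \<noteq> snd e"
  using adj_irrefl by (metis mem_arcs_iff)

definition edges :: "(nat \<times> nat) list" where
  "edges = filter (\<lambda>e. fst e < snd e) as"

lemma distinct_edges: "distinct edges"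
  and set_edges: "set edges = {e \<in> set as. fst e < snd e}"
  using distinct_arcs by (auto simp: edges_def)

lemma edge_of_mem_edges: "e \<in> set as \<Longrightarrow> edge_of e \<in> set edges"
  using arc_not_loop[of e] swap_mem_arcs[of e]
  by (cases e) (auto simp: set_edges edge_of_def)

lemma arcs_of_edge: "e \<in> set edges \<Longrightarrow> {x \<in> set as. edge_of x = e} = {e, prod.swap e}"
  using swap_mem_arcs by (cases e) (auto simp: set_edges edge_of_def)

lemma length_arcs: "length as = 2 * length edges"
proof -
  have "set as = set edges \<union> prod.swap ` set edges"
  proof (intro equalityI subsetI)
    fix x assume "x \<in> set as"
    then have "edge_of x \<in> set edges" by (rule edge_of_mem_edges)
    moreover have "x = edge_of x \<or> x = prod.swap (edge_of x)" by (simp add: edge_of_def)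
    ultimately show "x \<in> set edges \<union> prod.swap ` set edges" by force
  qed (auto simp: set_edges mem_arcs_iff intro: adj_sym)
  moreover have "set edges \<inter> prod.swap ` set edges = {}"
    by (auto simp: set_edges)
  moreover have "card (prod.swap ` set edges) = card (set edges)"
    by (rule card_image[OF inj_swap])
  ultimately show ?thesis
    by (simp add: card_Un_disjoint distinct_card[symmetric] distinct_arcs distinct_edges)
qed

lemma length_edges: "length edges = num_edges adj"
proof -
  have "{{u, v} | u v. adj u v} = (\<lambda>e. {fst e, snd e}) ` set edges"
  proof (intro equalityI subsetI)
    fix s assume "s \<in> {{u, v} | u v. adj u v}"
    then obtain x where x: "x \<in> set as" and s: "s = {fst x, snd x}"
      by (auto simp: mem_arcs_iff)
    have "{fst (edge_of x), snd (edge_of x)} = s"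
      unfolding s edge_of_def by auto
    then show "s \<in> (\<lambda>e. {fst e, snd e}) ` set edges"
      using edge_of_mem_edges[OF x] by blast
  next
    fix s assume "s \<in> (\<lambda>e. {fst e, snd e}) ` set edges"
    then obtain e where "e \<in> set as" "s = {fst e, snd e}"
      by (auto simp: set_edges)
    then show "s \<in> {{u, v} | u v. adj u v}"
      by (auto simp: mem_arcs_iff)
  qed
  moreover have "inj_on (\<lambda>e. {fst e, snd e}) (set edges)"
  proof (rule inj_onI)
    fix x y assume "x \<in> set edges" "y \<in> set edges" "{fst x, snd x} = {fst y, snd y}"
    then show "x = y"
      by (auto simp: set_edges doubleton_eq_iff prod_eq_iff)
  qed
  ultimately show ?thesis
    by (simp add: num_edges_def card_image distinct_card distinct_edges)
qed

abbreviation src_mat :: "real mat" where "src_mat \<equiv> incidence_mat as [0..<n] fst"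
abbreviation tgt_mat :: "real mat" where "tgt_mat \<equiv> incidence_mat as [0..<n] snd"
abbreviation edge_mat :: "real mat" where "edge_mat \<equiv> incidence_mat as edges edge_of"
abbreviation rev_mat :: "real mat" where "rev_mat \<equiv> incidence_mat as as prod.swap"

lemma src_tgt_carrier: "src_mat \<in> carrier_mat (length as) n" "tgt_mat \<in> carrier_mat (length as) n"
  using incidence_mat_carrier[of as "[0..<n]"] by simp_all

lemma ends_arcs_bounded: "fst ` set as \<subseteq> set [0..<n]" "snd ` set as \<subseteq> set [0..<n]"
  using adj_bounded by (auto simp: mem_arcs_iff)

lemma edge_mat_mult_transpose: "edge_mat * edge_mat\<^sup>T = 1\<^sub>m (length as) + rev_mat"
proof -
  have "edge_of (as ! i) = edge_of (as ! j) \<longleftrightarrow> i = j \<or> prod.swap (as ! i) = as ! j"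
    if "i < length as" "j < length as" for i j
    using that arc_not_loop[OF nth_mem] distinct_arcs
    by (subst edge_of_eq_iff) (auto simp: nth_eq_iff_index_eq)
  moreover have "prod.swap (as ! i) \<noteq> as ! i" if "i < length as" for i
    using arc_not_loop[OF nth_mem[OF that]] by (auto simp: prod_eq_iff)
  ultimately show ?thesis
    using edge_of_mem_edges
    by (subst incidence_mat_mult_transpose[OF distinct_edges]) (auto intro!: eq_matI)
qed

lemma edge_mat_transpose_mult: "edge_mat\<^sup>T * edge_mat = 2 \<cdot>\<^sub>m 1\<^sub>m (length edges)"
proof -
  have "card {x \<in> set as. edge_of x = edges ! k \<and> edge_of x = edges ! l} = (if k = l then 2 else 0)"
    if "k < length edges" "l < length edges" for k l
  proof (cases "k = l")
    case True
    have "edges ! k \<in> set edges" using that by simp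
    then have "fst (edges ! k) < snd (edges ! k)" by (simp add: set_edges)
    then show ?thesis
      using True arcs_of_edge[OF \<open>edges ! k \<in> set edges\<close>] by (cases "edges ! k") auto
  next
    case False
    then show ?thesis
      using that distinct_edges by (auto simp: nth_eq_iff_index_eq)
  qed
  then show ?thesis
    by (subst incidence_mat_transpose_mult[OF distinct_arcs]) (auto intro!: eq_matI)
qed

lemma rev_mat_mult_src: "rev_mat * src_mat = tgt_mat"
proof -
  have "prod.swap ` set as \<subseteq> set as" using swap_mem_arcs by auto
  moreover have "fst \<circ> prod.swap = snd" by auto
  ultimately show ?thesis
    by (metis incidence_mat_mult distinct_arcs)
qed

lemma tgt_transpose_mult_tgt: "tgt_mat\<^sup>T * tgt_mat = real (q + 1) \<cdot>\<^sub>m 1\<^sub>m n"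
proof -
  have "card {x \<in> set as. snd x = v} = q + 1" if "v < n" for v
  proof -
    have "{x \<in> set as. snd x = v} = (\<lambda>u. (u, v)) ` {u. u < n \<and> adj v u}"
      using adj_bounded adj_sym by (auto simp: mem_arcs_iff)
    then show ?thesis
      using deg_eq[OF that] by (simp add: card_image inj_on_def deg_def)
  qed
  then show ?thesis
    by (subst incidence_mat_transpose_mult[OF distinct_arcs]) (auto intro!: eq_matI)
qed

lemma tgt_transpose_mult_src: "tgt_mat\<^sup>T * src_mat = adj_mat n adj"
proof -
  have "{x \<in> set as. snd x = v \<and> fst x = w} = (if adj v w then {(w, v)} else {})" for v w
    using adj_sym by (auto simp: mem_arcs_iff)
  then show ?thesis
    by (subst incidence_mat_transpose_mult[OF distinct_arcs]) (auto simp: adj_mat_def intro!: eq_matI)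
qed

lemma src_mult_tgt_transpose:
  "src_mat * tgt_mat\<^sup>T = mat (length as) (length as) (\<lambda>(i, j). if fst (as ! i) = snd (as ! j) then 1 else 0)"
  using ends_arcs_bounded by (simp add: incidence_mat_mult_transpose)

text \<open>The entry of the Grover matrix at arcs f, e with t(f) = o(e) and f not the reverse of e.\<close>
definition arc_weight :: "real \<Rightarrow> real \<Rightarrow> real" where
  "arc_weight a b = (2 / real (q + 1) - 1) * a + b"

lemma degree_times_arc_weight: "real (q + 1) * arc_weight a b = (1 - real q) * a + b * (real q + 1)"
  by (simp add: arc_weight_def field_simps)

lemma grover_mat_eq:
  "grover_mat n adj as a b = arc_weight a b \<cdot>\<^sub>m (src_mat * tgt_mat\<^sup>T) - b \<cdot>\<^sub>m rev_mat"
proof (rule eq_matI)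
  fix i j assume "i < dim_row (arc_weight a b \<cdot>\<^sub>m (src_mat * tgt_mat\<^sup>T) - b \<cdot>\<^sub>m rev_mat)"
    "j < dim_col (arc_weight a b \<cdot>\<^sub>m (src_mat * tgt_mat\<^sup>T) - b \<cdot>\<^sub>m rev_mat)"
  then have i: "i < length as" and j: "j < length as" by auto
  have "deg n adj (snd (as ! j)) = q + 1"
    using deg_eq adj_bounded nth_mem[OF j] by (auto simp: mem_arcs_iff)
  then show "grover_mat n adj as a b $$ (i, j)
    = (arc_weight a b \<cdot>\<^sub>m (src_mat * tgt_mat\<^sup>T) - b \<cdot>\<^sub>m rev_mat) $$ (i, j)"
    using i j by (auto simp: grover_mat_def arc_weight_def src_mult_tgt_transpose Let_def prod.swap_def)
qed (auto simp: grover_mat_def)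

lemma tgt_edge_edge_src:
  "(tgt_mat\<^sup>T * edge_mat) * (edge_mat\<^sup>T * src_mat) = adj_mat n adj + real (q + 1) \<cdot>\<^sub>m 1\<^sub>m n"
proof -
  have "edge_mat * (edge_mat\<^sup>T * src_mat) = (edge_mat * edge_mat\<^sup>T) * src_mat"
    using src_tgt_carrier by (intro assoc_mult_mat[symmetric, of _ "length as" "length edges" _ "length as" _ n]) auto
  also have "\<dots> = src_mat + rev_mat * src_mat"
    using src_tgt_carrier by (simp add: edge_mat_mult_transpose add_mult_distrib_mat[of _ "length as" "length as"])
  finally have XXS: "edge_mat * (edge_mat\<^sup>T * src_mat) = src_mat + tgt_mat"
    by (simp only: rev_mat_mult_src)
  have "(tgt_mat\<^sup>T * edge_mat) * (edge_mat\<^sup>T * src_mat) = tgt_mat\<^sup>T * (edge_mat * (edge_mat\<^sup>T * src_mat))"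
    using src_tgt_carrier by (intro assoc_mult_mat[of _ n "length as" _ "length edges" _ n]) auto
  also have "\<dots> = adj_mat n adj + real (q + 1) \<cdot>\<^sub>m 1\<^sub>m n"
    using src_tgt_carrier
    by (simp add: XXS mult_add_distrib_mat[of _ n "length as"] tgt_transpose_mult_src tgt_transpose_mult_tgt)
  finally show ?thesis .
qed

lemma trans_mat_eq: "trans_mat n adj = (1 / real (q + 1)) \<cdot>\<^sub>m adj_mat n adj"
  by (rule eq_matI) (auto simp: trans_mat_def adj_mat_def deg_eq)

lemma degree_mat_eq: "degree_mat n adj = real (q + 1) \<cdot>\<^sub>m 1\<^sub>m n"
  by (rule eq_matI) (auto simp: degree_mat_def deg_eq)

lemma smult_one_minus_smult_trans_mat:
  "x \<cdot>\<^sub>m 1\<^sub>m n - y \<cdot>\<^sub>m trans_mat n adj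
    = (x - y) \<cdot>\<^sub>m 1\<^sub>m n + (y / real (q + 1)) \<cdot>\<^sub>m (degree_mat n adj - adj_mat n adj)"
  by (rule eq_matI) (auto simp: trans_mat_eq degree_mat_eq adj_mat_def adj_irrefl)

lemma smult_one_minus_grover_mat:
  "lam \<cdot>\<^sub>m 1\<^sub>m (length as) - grover_mat n adj as a b = (lam - b) \<cdot>\<^sub>m 1\<^sub>m (length as)
     - append_cols edge_mat src_mat * (((- b) \<cdot>\<^sub>m edge_mat\<^sup>T) @\<^sub>r (arc_weight a b \<cdot>\<^sub>m tgt_mat\<^sup>T))"
proof -
  have "append_cols edge_mat src_mat * (((- b) \<cdot>\<^sub>m edge_mat\<^sup>T) @\<^sub>r (arc_weight a b \<cdot>\<^sub>m tgt_mat\<^sup>T))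
      = (- b) \<cdot>\<^sub>m (1\<^sub>m (length as) + rev_mat) + arc_weight a b \<cdot>\<^sub>m (src_mat * tgt_mat\<^sup>T)"
    using src_tgt_carrier
    by (subst append_cols_mult_append_rows[of _ "length as" "length edges" _ n _ "length as"])
      (auto simp: mult_smult_distrib[of edge_mat "length as" "length edges" "edge_mat\<^sup>T" "length as"] edge_mat_mult_transpose)
  then show ?thesis
    using src_tgt_carrier unfolding grover_mat_eq
    by (intro eq_matI) (auto simp: algebra_simps)
qed

lemma smult_one_minus_swapped_factors:
  "(lam - b) \<cdot>\<^sub>m 1\<^sub>m (length edges + n)
     - (((- b) \<cdot>\<^sub>m edge_mat\<^sup>T) @\<^sub>r (arc_weight a b \<cdot>\<^sub>m tgt_mat\<^sup>T)) * append_cols edge_mat src_mat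
   = four_block_mat ((lam + b) \<cdot>\<^sub>m 1\<^sub>m (length edges)) (b \<cdot>\<^sub>m (edge_mat\<^sup>T * src_mat))
       ((- arc_weight a b) \<cdot>\<^sub>m (tgt_mat\<^sup>T * edge_mat)) ((lam - b) \<cdot>\<^sub>m 1\<^sub>m n - arc_weight a b \<cdot>\<^sub>m adj_mat n adj)"
proof -
  let ?X = "edge_mat" and ?S = "src_mat" and ?T = "tgt_mat" and ?w = "arc_weight a b"
  have X: "?X \<in> carrier_mat (length as) (length edges)" by simp
  note ST = src_tgt_carrier
  have ZW: "((- b) \<cdot>\<^sub>m ?X\<^sup>T @\<^sub>r ?w \<cdot>\<^sub>m ?T\<^sup>T) * append_cols ?X ?S
     = four_block_mat ((- b) \<cdot>\<^sub>m (?X\<^sup>T * ?X)) ((- b) \<cdot>\<^sub>m (?X\<^sup>T * ?S)) (?w \<cdot>\<^sub>m (?T\<^sup>T * ?X)) (?w \<cdot>\<^sub>m adj_mat n adj)"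
    using ST X
    by (subst append_rows_mult_append_cols[of _ "length edges" "length as" _ n _ "length edges" _ n])
      (auto simp: mult_smult_assoc_mat[of "?X\<^sup>T" "length edges" "length as" ?X "length edges"]
        mult_smult_assoc_mat[of "?T\<^sup>T" n "length as" ?X "length edges"]
        mult_smult_assoc_mat[of "?X\<^sup>T" "length edges" "length as" ?S n]
        mult_smult_assoc_mat[of "?T\<^sup>T" n "length as" ?S n] tgt_transpose_mult_src)
  show ?thesis
    unfolding ZW using ST X
    by (subst smult_one_minus_four_block_mat[of _ "length edges" _ n])
      (auto simp: edge_mat_transpose_mult adj_mat_def intro!: cong_four_block_mat eq_matI)
qed

lemma schur_complement_eq:
  "(lam + b) \<cdot>\<^sub>m ((lam - b) \<cdot>\<^sub>m 1\<^sub>m n - arc_weight a b \<cdot>\<^sub>m adj_mat n adj)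
     - ((- arc_weight a b) \<cdot>\<^sub>m (tgt_mat\<^sup>T * edge_mat)) * (b \<cdot>\<^sub>m (edge_mat\<^sup>T * src_mat))
   = (lam\<^sup>2 + b * ((1 - real q) * a + b * real q)) \<cdot>\<^sub>m 1\<^sub>m n
     - (lam * ((1 - real q) * a + b * (real q + 1))) \<cdot>\<^sub>m trans_mat n adj"
proof -
  let ?w = "arc_weight a b"
  have TX: "tgt_mat\<^sup>T * edge_mat \<in> carrier_mat n (length edges)"
    and XS: "edge_mat\<^sup>T * src_mat \<in> carrier_mat (length edges) n"
    using src_tgt_carrier by auto
  have CB: "((- ?w) \<cdot>\<^sub>m (tgt_mat\<^sup>T * edge_mat)) * (b \<cdot>\<^sub>m (edge_mat\<^sup>T * src_mat))
      = (- ?w) \<cdot>\<^sub>m (b \<cdot>\<^sub>m (adj_mat n adj + real (q + 1) \<cdot>\<^sub>m 1\<^sub>m n))"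
    by (simp add: mult_smult_assoc_mat[OF TX smult_carrier_mat[OF XS]] mult_smult_distrib[OF TX XS] tgt_edge_edge_src)
  have weight: "(1 - real q) * a + b * (real q + 1) = real (q + 1) * ?w"
    by (rule degree_times_arc_weight[symmetric])
  have shift: "b * ((1 - real q) * a + b * real q) = b * (real (q + 1) * ?w) - b * b"
    unfolding weight[symmetric] by (simp add: algebra_simps)
  have "1 + real q \<noteq> 0" by linarith
  then show ?thesis
    unfolding CB trans_mat_eq weight shift
    by (intro eq_matI) (auto simp: adj_mat_def adj_irrefl power2_eq_square field_simps)
qed

lemma det_grover_mat_cleared:
  "det (lam \<cdot>\<^sub>m 1\<^sub>m (length as) - grover_mat n adj as a b) * (lam - b) ^ (length edges + n) * (lam + b) ^ n
   = (lam - b) ^ (2 * length edges) * (lam + b) ^ length edges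
     * det ((lam\<^sup>2 + b * ((1 - real q) * a + b * real q)) \<cdot>\<^sub>m 1\<^sub>m n
            - (lam * ((1 - real q) * a + b * (real q + 1))) \<cdot>\<^sub>m trans_mat n adj)"
  (is "?F * _ * _ = _ * _ * det ?H")
proof -
  let ?W = "append_cols edge_mat src_mat"
    and ?Z = "((- b) \<cdot>\<^sub>m edge_mat\<^sup>T) @\<^sub>r (arc_weight a b \<cdot>\<^sub>m tgt_mat\<^sup>T)"
    and ?K = "four_block_mat ((lam + b) \<cdot>\<^sub>m 1\<^sub>m (length edges)) (b \<cdot>\<^sub>m (edge_mat\<^sup>T * src_mat))
       ((- arc_weight a b) \<cdot>\<^sub>m (tgt_mat\<^sup>T * edge_mat)) ((lam - b) \<cdot>\<^sub>m 1\<^sub>m n - arc_weight a b \<cdot>\<^sub>m adj_mat n adj)"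
  have W: "?W \<in> carrier_mat (length as) (length edges + n)"
    and Z: "?Z \<in> carrier_mat (length edges + n) (length as)"
    using src_tgt_carrier by auto
  have sylvester: "?F * (lam - b) ^ (length edges + n) = (lam - b) ^ length as * det ?K"
    unfolding smult_one_minus_grover_mat smult_one_minus_swapped_factors[symmetric]
    by (rule det_smult_one_minus_mult_swap[OF W Z])
  have schur: "det ?K * (lam + b) ^ n = (lam + b) ^ length edges * det ?H"
    unfolding schur_complement_eq[symmetric] using src_tgt_carrier
    by (intro det_four_block_mat_smult_one_corner) (auto simp: adj_mat_def)
  have "?F * (lam - b) ^ (length edges + n) * (lam + b) ^ n = (lam - b) ^ length as * (det ?K * (lam + b) ^ n)"
    by (simp only: sylvester mult.assoc)
  also have "\<dots> = (lam - b) ^ (2 * length edges) * (lam + b) ^ length edges * det ?H"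
    by (simp only: schur length_arcs mult.assoc)
  finally show ?thesis .
qed

lemma det_grover_eq_trans_mat:
  assumes "n \<le> num_edges adj \<or> lam\<^sup>2 \<noteq> b\<^sup>2"
  shows "det (lam \<cdot>\<^sub>m 1\<^sub>m (2 * num_edges adj) - grover_mat n adj as a b)
    = (lam\<^sup>2 - b\<^sup>2) powi (int (num_edges adj) - int n)
      * det ((lam\<^sup>2 + b * ((1 - real q) * a + b * real q)) \<cdot>\<^sub>m 1\<^sub>m n
             - (lam * ((1 - real q) * a + b * (real q + 1))) \<cdot>\<^sub>m trans_mat n adj)"
proof (rule eq_powi_mult_of_mult_eq[where F = "\<lambda>x. det (x \<cdot>\<^sub>m 1\<^sub>m (2 * num_edges adj) - grover_mat n adj as a b)"])
  let ?N = "2 * num_edges adj" and ?G = "grover_mat n adj as a b"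
  have G: "?G \<in> carrier_mat ?N ?N"
    using length_arcs length_edges by (simp add: grover_mat_def)
  then have one_smult: "x \<cdot>\<^sub>m 1\<^sub>m ?N - ?G = x \<cdot>\<^sub>m 1\<^sub>m ?N - 1 \<cdot>\<^sub>m ?G" for x
    by (intro eq_matI) auto
  show "continuous (at lam) (\<lambda>x. det (x \<cdot>\<^sub>m 1\<^sub>m ?N - ?G))"
    unfolding one_smult by (intro continuous_at_det_smult_diff[OF one_carrier_mat G] continuous_intros)
  show "continuous (at lam) (\<lambda>x. det ((x\<^sup>2 + b * ((1 - real q) * a + b * real q)) \<cdot>\<^sub>m 1\<^sub>m n
             - (x * ((1 - real q) * a + b * (real q + 1))) \<cdot>\<^sub>m trans_mat n adj))"
    by (intro continuous_at_det_smult_diff continuous_intros) (auto simp: trans_mat_def)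
  show "det (x \<cdot>\<^sub>m 1\<^sub>m ?N - ?G) * (x - b) ^ (num_edges adj + n) * (x + b) ^ n
    = (x - b) ^ (2 * num_edges adj) * (x + b) ^ num_edges adj
      * det ((x\<^sup>2 + b * ((1 - real q) * a + b * real q)) \<cdot>\<^sub>m 1\<^sub>m n
             - (x * ((1 - real q) * a + b * (real q + 1))) \<cdot>\<^sub>m trans_mat n adj)" for x
    using det_grover_mat_cleared[of x] by (simp only: length_arcs length_edges)
qed (use assms in simp)

end

theorem corollary3:
  fixes n q :: nat and adj :: "nat \<Rightarrow> nat \<Rightarrow> bool" and as :: "(nat \<times> nat) list"
    and a b lam :: real
  assumes "simple_graph n adj" and "connected_graph n adj"
    and "regular_graph n adj (q + 1)"
    and "arc_enum adj as"
    and "0 \<le> a" and "a \<le> 1"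
    and "num_edges adj \<ge> n \<or> lam\<^sup>2 \<noteq> b\<^sup>2"
  shows "det (lam \<cdot>\<^sub>m 1\<^sub>m (2 * num_edges adj) - grover_mat n adj as a b) =
           (lam\<^sup>2 - b\<^sup>2) powi (int (num_edges adj) - int n) *
           det ((lam\<^sup>2 + b * ((1 - real q) * a + b * real q)) \<cdot>\<^sub>m 1\<^sub>m n
                - (lam * ((1 - real q) * a + b * (real q + 1))) \<cdot>\<^sub>m trans_mat n adj)
       \<and> det (lam \<cdot>\<^sub>m 1\<^sub>m (2 * num_edges adj) - grover_mat n adj as a b) =
           (lam\<^sup>2 - b\<^sup>2) powi (int (num_edges adj) - int n) *
           det ((lam\<^sup>2 - lam * ((1 - real q) * a + b * (real q + 1))
                   + b * ((1 - real q) * a + b * real q)) \<cdot>\<^sub>m 1\<^sub>m n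
                + (lam * (b - (real q - 1) / (real q + 1) * a))
                   \<cdot>\<^sub>m (degree_mat n adj - adj_mat n adj))"
proof -
  interpret regular_graph_arcs n q adj as
    using assms(1,3,4) by unfold_locales
  let ?g = "(1 - real q) * a + b * (real q + 1)" and ?\<beta> = "b * ((1 - real q) * a + b * real q)"
  have "lam\<^sup>2 + ?\<beta> - lam * ?g = lam\<^sup>2 - lam * ?g + ?\<beta>"
    and "lam * ?g / real (q + 1) = lam * (b - (real q - 1) / (real q + 1) * a)"
    by (simp_all add: field_simps)
  then have "(lam\<^sup>2 + ?\<beta>) \<cdot>\<^sub>m 1\<^sub>m n - (lam * ?g) \<cdot>\<^sub>m trans_mat n adj
    = (lam\<^sup>2 - lam * ?g + ?\<beta>) \<cdot>\<^sub>m 1\<^sub>m n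
      + (lam * (b - (real q - 1) / (real q + 1) * a)) \<cdot>\<^sub>m (degree_mat n adj - adj_mat n adj)"
    unfolding smult_one_minus_smult_trans_mat by (simp only:)
  with det_grover_eq_trans_mat assms(7) show ?thesis
    by auto
qed

end
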